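(* Let $\alpha\approx1.46557$ be the real root of $x^3-x^2-1$ between $1$ and $2$. Every graph of pathwidth at most $1$ and order $n$ has at most $\alpha^n$ 1-minimal perfect dominating sets. Moreover, the number of 1-minimal perfect dominating sets of the path on $n$ vertices is $\Theta(\alpha^n)$.
   Context: A perfect dominating set of $G=(V,E)$ is a set $D\subseteq V$ such that every vertex of $V\setminus D$ has exactly one neighbour in $D$ (no condition on vertices of $D$); i.e. an $(\mathbb{N},\{1\})$-dominating set. It is 1-minimal if for every $x\in D$, $D\setminus\{x\}$ is not a perfect dominating set. Order = number of vertices; pathwidth is the standard notion. *)

theory Defs
  imports Complex_Main "HOL-Library.Landau_Symbols"
begin

definition simple_graph :: "'a set \<Rightarrow> 'a set set \<Rightarrow> bool" where
  "simple_graph V E \<longleftrightarrow> finite V \<and> (\<forall>e\<in>E. e \<subseteq> V \<and> card e = 2)"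

definition adj :: "'a set set \<Rightarrow> 'a \<Rightarrow> 'a \<Rightarrow> bool" where
  "adj E u v \<longleftrightarrow> {u, v} \<in> E"

definition path_decomposition :: "'a set \<Rightarrow> 'a set set \<Rightarrow> 'a set list \<Rightarrow> nat \<Rightarrow> bool" where
  "path_decomposition V E bags k \<longleftrightarrow>
     (\<forall>B\<in>set bags. B \<subseteq> V \<and> card B \<le> k + 1) \<and>
     V \<subseteq> \<Union>(set bags) \<and>
     (\<forall>e\<in>E. \<exists>B\<in>set bags. e \<subseteq> B) \<and>
     (\<forall>v i j l. i \<le> j \<and> j \<le> l \<and> l < length bags \<and> v \<in> bags ! i \<and> v \<in> bags ! l
                 \<longrightarrow> v \<in> bags ! j)"

definition pathwidth_at_most :: "'a set \<Rightarrow> 'a set set \<Rightarrow> nat \<Rightarrow> bool" where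
  "pathwidth_at_most V E k \<longleftrightarrow> (\<exists>bags. path_decomposition V E bags k)"

definition perfect_dominating :: "'a set \<Rightarrow> 'a set set \<Rightarrow> 'a set \<Rightarrow> bool" where
  "perfect_dominating V E D \<longleftrightarrow> D \<subseteq> V \<and>
     (\<forall>v \<in> V - D. card {u \<in> D. adj E u v} = 1)"

definition one_minimal_pds :: "'a set \<Rightarrow> 'a set set \<Rightarrow> 'a set \<Rightarrow> bool" where
  "one_minimal_pds V E D \<longleftrightarrow> perfect_dominating V E D \<and>
     (\<forall>x\<in>D. \<not> perfect_dominating V E (D - {x}))"

definition path_V :: "nat \<Rightarrow> nat set" where
  "path_V n = {0..<n}"

definition path_E :: "nat \<Rightarrow> nat set set" where
  "path_E n = {{i, Suc i} | i. Suc i < n}"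

end

theory Submission
  imports Defs
begin

text \<open>A set D is a 1-minimal perfect dominating set exactly when every vertex outside D has
  exactly one neighbour in D and no vertex of D is a leaf attached to a vertex of D. Being a local
  condition, it transfers between G and G - S once the few vertices next to S are checked.

  In a graph with a path decomposition of width 1, the vertex x whose last bag comes first is
  isolated, lies in a K2 component, is one of two leaves at a common vertex, or starts a pendant
  path x - p - q in which at most one neighbour of q other than p is not a leaf. The first three
  cases cost at most a factor 2 \<le> \<alpha>^2 per two deleted vertices. In the last one, the sets avoiding x
  inject into those of G - x (p is dropped when q is in D), and the sets containing x inject into
  those of G - {x, p, q} (the neighbour of q in D is dropped when it would become a leaf of D).
  Hence f(n) \<le> f(n - 1) + f(n - 3), the recurrence of \<alpha>^n. On a path both maps can be
  reversed, so f(n + 3) \<ge> f(n + 2) + f(n) and the bound is attained up to a constant.\<close>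

section \<open>Local characterisation of 1-minimality\<close>

definition pendant :: "'a set set \<Rightarrow> 'a \<Rightarrow> 'a \<Rightarrow> bool" where
  "pendant E x y \<longleftrightarrow> (\<forall>z. adj E z x \<longleftrightarrow> z = y)"

definition mpds_at :: "'a set set \<Rightarrow> 'a set \<Rightarrow> 'a \<Rightarrow> bool" where
  "mpds_at E D v \<longleftrightarrow> (if v \<in> D then \<forall>y\<in>D. \<not> pendant E v y else \<exists>!u\<in>D. adj E u v)"

definition delete_vertices :: "'a set set \<Rightarrow> 'a set \<Rightarrow> 'a set set" where
  "delete_vertices E S = {e \<in> E. e \<inter> S = {}}"

abbreviation num_mpds :: "'a set \<Rightarrow> 'a set set \<Rightarrow> nat" where
  "num_mpds V E \<equiv> card {D. one_minimal_pds V E D}"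

lemma adj_sym: "adj E u v \<longleftrightarrow> adj E v u"
  by (simp add: adj_def insert_commute)

lemma simple_graph_adjD:
  assumes "simple_graph V E" "adj E u v"
  shows "u \<in> V" "v \<in> V" "u \<noteq> v"
  using assms by (auto simp: simple_graph_def adj_def)

lemma adj_delete_vertices: "adj (delete_vertices E S) u v \<longleftrightarrow> adj E u v \<and> u \<notin> S \<and> v \<notin> S"
  by (auto simp: adj_def delete_vertices_def)

lemma simple_graph_delete_vertices:
  "simple_graph V E \<Longrightarrow> simple_graph (V - S) (delete_vertices E S)"
  by (auto simp: simple_graph_def delete_vertices_def)

lemma pendant_adj: "pendant E x y \<Longrightarrow> adj E y x"
  by (simp add: pendant_def)

lemma pendant_unique: "pendant E x y \<Longrightarrow> adj E z x \<Longrightarrow> z = y"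
  by (simp add: pendant_def)

lemma other_nbr_if_not_pendant: "adj E w y \<Longrightarrow> \<not> pendant E y w \<Longrightarrow> \<exists>z. adj E z y \<and> z \<noteq> w"
  unfolding pendant_def by blast

lemma not_pendant_if_two_neighbours: "adj E a x \<Longrightarrow> adj E b x \<Longrightarrow> a \<noteq> b \<Longrightarrow> \<not> pendant E x y"
  by (metis pendant_def)

lemma pendant_delete_vertices:
  assumes "y \<notin> S" "\<And>z. z \<in> S \<Longrightarrow> \<not> adj E z y"
  shows "pendant (delete_vertices E S) y w \<longleftrightarrow> pendant E y w"
  using assms by (auto simp: pendant_def adj_delete_vertices)

lemma perfect_dominating_iff:
  "perfect_dominating V E D \<longleftrightarrow> D \<subseteq> V \<and> (\<forall>v\<in>V - D. \<exists>!u\<in>D. adj E u v)"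
  by (simp add: perfect_dominating_def card_eq_Suc_0_iff_is_singleton is_singleton_iff_ex1)

lemma pendant_if_perfect_dominating_remove:
  assumes graph: "simple_graph V E" and pds: "perfect_dominating V E D" and "x \<in> D"
    and pds': "perfect_dominating V E (D - {x})"
  shows "\<exists>y\<in>D. pendant E x y"
proof -
  have x_out: "x \<in> V - (D - {x})"
    using pds \<open>x \<in> D\<close> by (auto simp: perfect_dominating_iff)
  then obtain y where y: "y \<in> D - {x}" "adj E y x"
    using pds' unfolding perfect_dominating_iff bex1_def by blast
  have "z = y" if z: "adj E z x" for z
  proof (cases "z \<in> D")
    case True
    then have "z \<in> D - {x}"
      using simple_graph_adjD(3)[OF graph z] by simp
    then show ?thesis
      using pds' x_out y z unfolding perfect_dominating_iff bex1_def by blast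
  next
    case False
    then have z_out: "z \<in> V - D"
      using simple_graph_adjD[OF graph z] by auto
    then obtain w where "w \<in> D - {x}" "adj E w z"
      using pds' unfolding perfect_dominating_iff bex1_def by blast
    moreover have "adj E x z"
      using z adj_sym by metis
    ultimately show ?thesis
      using pds z_out \<open>x \<in> D\<close> unfolding perfect_dominating_iff bex1_def by blast
  qed
  then show ?thesis
    using y unfolding pendant_def by blast
qed

lemma perfect_dominating_remove_pendant:
  assumes graph: "simple_graph V E" and pds: "perfect_dominating V E D"
    and y: "y \<in> D" "pendant E x y"
  shows "perfect_dominating V E (D - {x})"
proof -
  have "y \<noteq> x"
    using simple_graph_adjD(3)[OF graph pendant_adj[OF y(2)]] by simp
  have "\<exists>!u\<in>D - {x}. adj E u v" if v: "v \<in> V - (D - {x})" for v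
  proof (cases "v = x")
    case True
    then show ?thesis
      using y \<open>y \<noteq> x\<close> unfolding pendant_def by auto
  next
    case False
    then have "v \<in> V - D" "\<not> adj E x v"
      using v y(1) pendant_unique[OF y(2), of v] adj_sym[of E x v] by auto
    then show ?thesis
      using pds unfolding perfect_dominating_iff bex1_def by blast
  qed
  moreover have "D - {x} \<subseteq> V"
    using pds by (auto simp: perfect_dominating_iff)
  ultimately show ?thesis
    by (simp add: perfect_dominating_iff)
qed

lemma perfect_dominating_remove_iff:
  assumes "simple_graph V E" "perfect_dominating V E D" "x \<in> D"
  shows "perfect_dominating V E (D - {x}) \<longleftrightarrow> (\<exists>y\<in>D. pendant E x y)"
  using pendant_if_perfect_dominating_remove[OF assms] perfect_dominating_remove_pendant[OF assms(1,2)]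
  by blast

lemma one_minimal_pds_iff:
  assumes "simple_graph V E"
  shows "one_minimal_pds V E D \<longleftrightarrow> D \<subseteq> V \<and> (\<forall>v\<in>V. mpds_at E D v)"
proof -
  have split: "(\<forall>v\<in>V. if v \<in> D then P v else Q v) \<longleftrightarrow> (\<forall>v\<in>V - D. Q v) \<and> (\<forall>v\<in>V \<inter> D. P v)"
    for P Q :: "'a \<Rightarrow> bool"
    by auto
  have "one_minimal_pds V E D \<longleftrightarrow> perfect_dominating V E D \<and> (\<forall>x\<in>D. \<forall>y\<in>D. \<not> pendant E x y)"
    unfolding one_minimal_pds_def using perfect_dominating_remove_iff[OF assms] by blast
  then show ?thesis
    unfolding perfect_dominating_iff mpds_at_def split by blast
qed

lemma mpds_at_member: "v \<in> D \<Longrightarrow> mpds_at E D v \<longleftrightarrow> (\<forall>y\<in>D. \<not> pendant E v y)"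
  by (simp add: mpds_at_def)

lemma mpds_at_nonmember: "v \<notin> D \<Longrightarrow> mpds_at E D v \<longleftrightarrow> (\<exists>!u\<in>D. adj E u v)"
  by (simp add: mpds_at_def)

lemma mpds_at_dominatedI:
  "v \<notin> D \<Longrightarrow> u \<in> D \<Longrightarrow> adj E u v \<Longrightarrow> \<forall>w\<in>D. adj E w v \<longrightarrow> w = u \<Longrightarrow> mpds_at E D v"
  unfolding mpds_at_def by auto

lemma mpds_at_outside_nbrI: "v \<in> D \<Longrightarrow> adj E a v \<Longrightarrow> a \<notin> D \<Longrightarrow> mpds_at E D v"
  by (metis mpds_at_member pendant_unique)

lemma one_minimal_pds_subset: "one_minimal_pds V E D \<Longrightarrow> D \<subseteq> V"
  by (simp add: one_minimal_pds_def perfect_dominating_def)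

lemma one_minimal_pds_dominator:
  "one_minimal_pds V E D \<Longrightarrow> v \<in> V \<Longrightarrow> v \<notin> D \<Longrightarrow> \<exists>!u\<in>D. adj E u v"
  by (simp add: one_minimal_pds_def perfect_dominating_iff)

lemma one_minimal_pds_dominatorE:
  assumes "one_minimal_pds V E D" "v \<in> V" "v \<notin> D"
  obtains u where "u \<in> D" "adj E u v" "\<And>w. w \<in> D \<Longrightarrow> adj E w v \<Longrightarrow> w = u"
  using one_minimal_pds_dominator[OF assms] by metis

lemma one_minimal_pds_not_pendant:
  "simple_graph V E \<Longrightarrow> one_minimal_pds V E D \<Longrightarrow> x \<in> D \<Longrightarrow> y \<in> D \<Longrightarrow> \<not> pendant E x y"
  by (metis one_minimal_pds_def perfect_dominating_remove_iff)

lemma one_minimal_pdsI: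
  assumes "simple_graph V E" "D \<subseteq> V" "\<And>v. v \<in> V \<Longrightarrow> mpds_at E D v"
  shows "one_minimal_pds V E D"
  using assms by (simp add: one_minimal_pds_iff)

lemma one_minimal_pds_restrict:
  assumes graph: "simple_graph V E" and min: "one_minimal_pds V E D"
    and sub: "D' \<subseteq> D - S"
    and dominator: "\<And>u v. v \<in> V - S - D \<Longrightarrow> u \<in> D \<Longrightarrow> adj E u v \<Longrightarrow> u \<in> D'"
    and pendant_lifts: "\<And>y w. y \<in> D' \<Longrightarrow> w \<in> D' \<Longrightarrow> pendant (delete_vertices E S) y w \<Longrightarrow> pendant E y w"
    and dropped: "\<And>v. v \<in> D - D' - S \<Longrightarrow> \<exists>!u\<in>D'. adj (delete_vertices E S) u v"
  shows "one_minimal_pds (V - S) (delete_vertices E S) D'"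
proof (rule one_minimal_pdsI[OF simple_graph_delete_vertices[OF graph]])
  show "D' \<subseteq> V - S"
    using sub one_minimal_pds_subset[OF min] by blast
  fix v assume v: "v \<in> V - S"
  consider "v \<in> D'" | "v \<in> D - D'" | "v \<notin> D"
    by blast
  then show "mpds_at (delete_vertices E S) D' v"
  proof cases
    case 1
    have "\<not> pendant (delete_vertices E S) v y" if "y \<in> D'" for y
      using pendant_lifts[OF 1 that] one_minimal_pds_not_pendant[OF graph min, of v y] 1 that sub by blast
    then show ?thesis
      using 1 by (simp add: mpds_at_member)
  next
    case 2
    then show ?thesis
      using dropped v by (simp add: mpds_at_nonmember)
  next
    case 3
    obtain u where u: "u \<in> D" "adj E u v" "\<And>w. w \<in> D \<Longrightarrow> adj E w v \<Longrightarrow> w = u"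
      using one_minimal_pds_dominatorE[OF min _ 3] v by blast
    have "u \<in> D'"
      using dominator[OF _ u(1,2)] v 3 by blast
    have "\<exists>!u\<in>D'. adj (delete_vertices E S) u v"
    proof (rule ex1I[of _ u])
      show "u \<in> D' \<and> adj (delete_vertices E S) u v"
        using \<open>u \<in> D'\<close> u(2) sub v by (auto simp: adj_delete_vertices)
      fix w assume "w \<in> D' \<and> adj (delete_vertices E S) w v"
      then show "w = u"
        using u(3)[of w] sub by (auto simp: adj_delete_vertices)
    qed
    moreover have "v \<notin> D'"
      using 3 sub by blast
    ultimately show ?thesis
      by (simp add: mpds_at_nonmember)
  qed
qed

lemma one_minimal_pds_extend:
  assumes graph: "simple_graph V E" and min: "one_minimal_pds (V - S) (delete_vertices E S) D'"
    and sub: "D' \<subseteq> D" "D \<subseteq> V"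
    and dominator: "\<And>u v. v \<in> V - S - D \<Longrightarrow> u \<in> D \<Longrightarrow> adj E u v \<Longrightarrow> u \<in> D'"
    and pendant_restricts: "\<And>y w. y \<in> D' \<Longrightarrow> w \<in> D \<Longrightarrow> pendant E y w \<Longrightarrow>
      w \<in> D' \<and> pendant (delete_vertices E S) y w"
    and added: "\<And>v. v \<in> V \<inter> (S \<union> (D - D')) \<Longrightarrow> mpds_at E D v"
  shows "one_minimal_pds V E D"
proof (rule one_minimal_pdsI[OF graph sub(2)])
  have graph': "simple_graph (V - S) (delete_vertices E S)"
    by (rule simple_graph_delete_vertices[OF graph])
  have D'_sub: "D' \<subseteq> V - S"
    by (rule one_minimal_pds_subset[OF min])
  fix v assume v: "v \<in> V"
  consider "v \<in> S \<union> (D - D')" | "v \<in> D'" | "v \<in> V - S - D"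
    using v by blast
  then show "mpds_at E D v"
  proof cases
    case 1
    then show ?thesis
      using added v by blast
  next
    case 2
    have "\<not> pendant E v w" if "w \<in> D" for w
      using pendant_restricts[OF 2 that] one_minimal_pds_not_pendant[OF graph' min 2] by blast
    then show ?thesis
      using 2 sub by (simp add: mpds_at_member subset_iff)
  next
    case 3
    then have v': "v \<in> V - S" "v \<notin> D'"
      using sub by blast+
    obtain u where u: "u \<in> D'" "adj (delete_vertices E S) u v"
      "\<And>w. w \<in> D' \<Longrightarrow> adj (delete_vertices E S) w v \<Longrightarrow> w = u"
      using one_minimal_pds_dominatorE[OF min v'] by blast
    have "\<exists>!u\<in>D. adj E u v"
    proof (rule ex1I[of _ u])
      show "u \<in> D \<and> adj E u v"
        using u(1,2) sub by (auto simp: adj_delete_vertices)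
      fix w assume w: "w \<in> D \<and> adj E w v"
      then have "w \<in> D'"
        using dominator[of v w] 3 by blast
      then show "w = u"
        using u(3)[of w] w 3 D'_sub by (simp add: adj_delete_vertices subset_iff)
    qed
    then show ?thesis
      using 3 by (simp add: mpds_at_nonmember)
  qed
qed

lemma finite_one_minimal_pds: "finite V \<Longrightarrow> finite {D. one_minimal_pds V E D}"
  by (rule finite_subset[of _ "Pow V"]) (auto dest: one_minimal_pds_subset)

lemma card_le_sum_by_cases:
  assumes "inj_on f {a \<in> A. P a}" "f ` {a \<in> A. P a} \<subseteq> B" "finite B"
    and "inj_on g {a \<in> A. \<not> P a}" "g ` {a \<in> A. \<not> P a} \<subseteq> C" "finite C"
  shows "card A \<le> card B + card C"
proof -
  have "A = {a \<in> A. P a} \<union> {a \<in> A. \<not> P a}"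
    by blast
  then have "card A \<le> card {a \<in> A. P a} + card {a \<in> A. \<not> P a}"
    by (metis card_Un_le)
  also have "\<dots> \<le> card B + card C"
    using card_inj_on_le[OF assms(1-3)] card_inj_on_le[OF assms(4-6)] by simp
  finally show ?thesis .
qed

section \<open>Reduction rules\<close>

lemma one_minimal_pds_delete_component:
  assumes graph: "simple_graph V E" and closed: "\<And>u v. adj E u v \<Longrightarrow> u \<in> S \<Longrightarrow> v \<in> S"
    and min: "one_minimal_pds V E D"
  shows "one_minimal_pds (V - S) (delete_vertices E S) (D - S)"
proof (rule one_minimal_pds_restrict[OF graph min])
  have no_edge: "\<not> adj E z y" if "z \<in> S" "y \<notin> S" for y z
    using closed that by blast
  show "pendant E y w" if "y \<in> D - S" "pendant (delete_vertices E S) y w" for y w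
    using that pendant_delete_vertices[of y S E w] no_edge by blast
  show "u \<in> D - S" if "v \<in> V - S - D" "u \<in> D" "adj E u v" for u v
    using that no_edge by blast
qed auto

lemma num_mpds_isolated_le:
  assumes graph: "simple_graph V E" and "x \<in> V" and isolated: "\<And>z. \<not> adj E z x"
  shows "num_mpds V E \<le> num_mpds (V - {x}) (delete_vertices E {x})"
proof (rule card_inj_on_le[of "\<lambda>D. D - {x}"])
  have "x \<in> D" if "one_minimal_pds V E D" for D
    using one_minimal_pds_dominator[OF that \<open>x \<in> V\<close>] isolated by blast
  then show "inj_on (\<lambda>D. D - {x}) {D. one_minimal_pds V E D}"
    by (intro inj_onI) (metis insert_Diff mem_Collect_eq)
  have "\<And>u v. adj E u v \<Longrightarrow> u \<in> {x} \<Longrightarrow> v \<in> {x}"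
    using isolated adj_sym by (metis singletonD)
  then show "(\<lambda>D. D - {x}) ` {D. one_minimal_pds V E D} \<subseteq> {D. one_minimal_pds (V - {x}) (delete_vertices E {x}) D}"
    using one_minimal_pds_delete_component[OF graph] by blast
  show "finite {D. one_minimal_pds (V - {x}) (delete_vertices E {x}) D}"
    using graph by (simp add: simple_graph_def finite_one_minimal_pds)
qed

lemma num_mpds_edge_component_le:
  assumes graph: "simple_graph V E" and leaves: "pendant E x p" "pendant E p x"
  shows "num_mpds V E \<le> 2 * num_mpds (V - {x, p}) (delete_vertices E {x, p})"
proof -
  let ?S = "{x, p}" and ?H = "{D. one_minimal_pds (V - {x, p}) (delete_vertices E {x, p}) D}"
  have "v \<in> ?S" if "adj E u v" "u \<in> ?S" for u v
  proof -
    have "adj E v u"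
      using that(1) adj_sym by metis
    then show ?thesis
      using that(2) pendant_unique[OF leaves(1)] pendant_unique[OF leaves(2)] by blast
  qed
  then have restrict: "(\<lambda>D. D - ?S) ` X \<subseteq> ?H" if "X \<subseteq> {D. one_minimal_pds V E D}" for X
    using one_minimal_pds_delete_component[OF graph] that by blast
  have x_in: "x \<in> V"
    using simple_graph_adjD[OF graph pendant_adj[OF leaves(2)]] by simp
  have "p \<notin> D" if "one_minimal_pds V E D" "x \<in> D" for D
    using one_minimal_pds_not_pendant[OF graph that] leaves(1) by blast
  then have inj1: "inj_on (\<lambda>D. D - ?S) {D \<in> {D. one_minimal_pds V E D}. x \<in> D}"
    by (intro inj_onI) blast
  have "p \<in> D" if min: "one_minimal_pds V E D" and x_out: "x \<notin> D" for D
  proof -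
    obtain u where "u \<in> D" "adj E u x"
      using one_minimal_pds_dominatorE[OF min x_in x_out] by blast
    then show ?thesis
      using pendant_unique[OF leaves(1)] by blast
  qed
  then have inj2: "inj_on (\<lambda>D. D - ?S) {D \<in> {D. one_minimal_pds V E D}. x \<notin> D}"
    by (intro inj_onI) blast
  have "finite ?H"
    using graph by (simp add: simple_graph_def finite_one_minimal_pds)
  then show ?thesis
    using card_le_sum_by_cases[OF inj1 restrict _ inj2 restrict] by fastforce
qed

lemma twin_leaf_not_in:
  assumes graph: "simple_graph V E" and min: "one_minimal_pds V E D"
    and leaves: "pendant E x p" "pendant E x' p" "x \<noteq> x'"
  shows "x' \<notin> D"
proof
  assume x': "x' \<in> D"
  have adj: "adj E x p" "adj E x' p"
    using leaves pendant_adj adj_sym by metis+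
  have "p \<notin> D"
    using one_minimal_pds_not_pendant[OF graph min x'] leaves(2) by blast
  moreover obtain u where "u \<in> D" "\<And>w. w \<in> D \<Longrightarrow> adj E w p \<Longrightarrow> w = u"
    using one_minimal_pds_dominatorE[OF min _ \<open>p \<notin> D\<close>] simple_graph_adjD[OF graph adj(1)] by blast
  ultimately have "x \<notin> D"
    using x' adj leaves(3) by metis
  then obtain u' where "u' \<in> D" "adj E u' x"
    using one_minimal_pds_dominatorE[OF min] simple_graph_adjD[OF graph adj(1)] by blast
  then show False
    using pendant_unique[OF leaves(1)] \<open>p \<notin> D\<close> by blast
qed

lemma num_mpds_twin_leaves_le:
  assumes graph: "simple_graph V E" and leaves: "pendant E x p" "pendant E x' p" "x \<noteq> x'"
  shows "num_mpds V E \<le> num_mpds (V - {x'}) (delete_vertices E {x'})"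
proof (rule card_inj_on_le[of id])
  show "id ` {D. one_minimal_pds V E D} \<subseteq> {D. one_minimal_pds (V - {x'}) (delete_vertices E {x'}) D}"
  proof clarsimp
    fix D assume min: "one_minimal_pds V E D"
    have not_in: "x \<notin> D" "x' \<notin> D"
      using twin_leaf_not_in[OF graph min] leaves by metis+
    show "one_minimal_pds (V - {x'}) (delete_vertices E {x'}) D"
    proof (rule one_minimal_pds_restrict[OF graph min])
      fix y w assume y: "y \<in> D" and w: "w \<in> D" and pend: "pendant (delete_vertices E {x'}) y w"
      show "pendant E y w"
      proof (cases "y = p")
        case True
        have "p \<noteq> x'"
          using simple_graph_adjD(3)[OF graph pendant_adj[OF leaves(2)]] by simp
        then have "adj (delete_vertices E {x'}) x y"
          using True leaves pendant_adj adj_sym by (metis adj_delete_vertices singletonD)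
        then have "x = w"
          using pend by (simp add: pendant_def)
        then show ?thesis
          using w not_in by simp
      next
        case False
        have "\<not> adj E x' y"
          using False pendant_unique[OF leaves(2)] adj_sym by metis
        then show ?thesis
          using pend y not_in pendant_delete_vertices[of y "{x'}" E w] by auto
      qed
    qed (use not_in in auto)
  qed
qed (use graph in \<open>simp_all add: simple_graph_def finite_one_minimal_pds\<close>)

locale pendant_path =
  fixes V :: "'a set" and E :: "'a set set" and x p q :: 'a
  assumes graph: "simple_graph V E" and leaf: "pendant E x p"
    and p_nbrs: "\<And>z. adj E z p \<longleftrightarrow> z = x \<or> z = q" and q_ne_x: "q \<noteq> x"
begin

lemma adj_x: "adj E z x \<longleftrightarrow> z = p" "adj E x z \<longleftrightarrow> z = p"
  using leaf adj_sym unfolding pendant_def by metis+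

lemma adj_p: "adj E p z \<longleftrightarrow> z = x \<or> z = q"
  using p_nbrs adj_sym by metis

lemma distinct_xpq: "x \<noteq> p" "p \<noteq> q" "q \<noteq> x"
  using simple_graph_adjD(3)[OF graph] adj_x adj_p q_ne_x by metis+

lemma xpq_in_V: "x \<in> V" "p \<in> V" "q \<in> V"
  using simple_graph_adjD[OF graph] adj_x adj_p by metis+

text \<open>When q \<in> D, deleting x turns p into a leaf attached to q, so p has to leave the set.\<close>
definition trim_out :: "'a set \<Rightarrow> 'a set" where
  "trim_out D = (if q \<in> D then D - {p} else D)"

lemma p_in_if_x_out: "one_minimal_pds V E D \<Longrightarrow> x \<notin> D \<Longrightarrow> p \<in> D"
  using one_minimal_pds_dominatorE[of V E D x] xpq_in_V adj_x by metis

lemma trim_out_minimal: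
  assumes min: "one_minimal_pds V E D" and "x \<notin> D"
  shows "one_minimal_pds (V - {x}) (delete_vertices E {x}) (trim_out D)"
proof (rule one_minimal_pds_restrict[OF graph min])
  show "trim_out D \<subseteq> D - {x}"
    using \<open>x \<notin> D\<close> by (auto simp: trim_out_def)
  show "u \<in> trim_out D" if "v \<in> V - {x} - D" "u \<in> D" "adj E u v" for u v
    using that adj_p by (auto simp: trim_out_def)
  show "pendant E y w"
    if y: "y \<in> trim_out D" and w: "w \<in> trim_out D" and pend: "pendant (delete_vertices E {x}) y w" for y w
  proof (cases "y = p")
    case True
    have "adj (delete_vertices E {x}) q y"
      using True p_nbrs distinct_xpq by (simp add: adj_delete_vertices)
    then have "w = q"
      using pend by (simp add: pendant_def)
    then show ?thesis
      using w y True by (simp add: trim_out_def split: if_splits)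
  next
    case False
    then show ?thesis
      using pend y adj_x(2) pendant_delete_vertices[of y "{x}" E w] \<open>x \<notin> D\<close>
      by (auto simp: trim_out_def split: if_splits)
  qed
  show "\<exists>!u\<in>trim_out D. adj (delete_vertices E {x}) u v" if v: "v \<in> D - trim_out D - {x}" for v
  proof -
    have "v = p" "q \<in> D"
      using v by (auto simp: trim_out_def split: if_splits)
    then show ?thesis
      using p_nbrs distinct_xpq by (auto simp: trim_out_def adj_delete_vertices)
  qed
qed

lemma inj_on_trim_out: "inj_on trim_out {D. one_minimal_pds V E D \<and> x \<notin> D}"
proof (rule inj_on_inverseI[of _ "insert p"])
  fix D assume "D \<in> {D. one_minimal_pds V E D \<and> x \<notin> D}"
  then show "insert p (trim_out D) = D"
    using p_in_if_x_out by (auto simp: trim_out_def)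
qed

lemma p_q_notin_if_x_in:
  assumes min: "one_minimal_pds V E D" and "x \<in> D"
  shows "p \<notin> D" "q \<notin> D"
proof -
  show "p \<notin> D"
    using one_minimal_pds_not_pendant[OF graph min \<open>x \<in> D\<close>] leaf by blast
  then obtain u where "\<And>w. w \<in> D \<Longrightarrow> adj E w p \<Longrightarrow> w = u"
    using one_minimal_pds_dominatorE[OF min] xpq_in_V by metis
  then show "q \<notin> D"
    using \<open>x \<in> D\<close> p_nbrs q_ne_x by metis
qed

lemma q_dominator_unique:
  assumes min: "one_minimal_pds V E D" and "x \<in> D"
    and "r \<in> D" "adj E r q" "r' \<in> D" "adj E r' q"
  shows "r = r'"
proof -
  obtain u where "\<And>w. w \<in> D \<Longrightarrow> adj E w q \<Longrightarrow> w = u"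
    using one_minimal_pds_dominatorE[OF min] xpq_in_V p_q_notin_if_x_in[OF min \<open>x \<in> D\<close>] by metis
  then show ?thesis
    using assms(3-6) by metis
qed

lemma adj_delete_xpq:
  "y \<notin> {x, p, q} \<Longrightarrow> adj (delete_vertices E {x, p, q}) z y \<longleftrightarrow> adj E z y \<and> z \<noteq> q"
  using adj_x adj_p adj_sym by (auto simp: adj_delete_vertices)

text \<open>Once q is deleted, a stranded vertex of D is a leaf attached to a vertex of D, so it has to
  leave the set.\<close>
definition stranded :: "'a set \<Rightarrow> 'a \<Rightarrow> bool" where
  "stranded D r \<longleftrightarrow> adj E r q \<and> r \<noteq> p \<and> (\<exists>s\<in>D. \<forall>z. adj E z r \<and> z \<noteq> q \<longleftrightarrow> z = s)"

definition trim_in :: "'a set \<Rightarrow> 'a set" where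
  "trim_in D = D - {x} - {r \<in> D. stranded D r}"

lemma stranded_not_pendant: "stranded D r \<Longrightarrow> \<not> pendant E r q"
  unfolding stranded_def pendant_def by blast

lemma stranded_nbr_in:
  assumes "stranded D r" "adj E z r" "z \<noteq> q"
  shows "z \<in> D"
proof -
  obtain s where "s \<in> D" and s: "\<And>z. adj E z r \<and> z \<noteq> q \<longleftrightarrow> z = s"
    using assms(1) unfolding stranded_def by blast
  then show ?thesis
    using s[of z] assms(2,3) by simp
qed

lemma trim_in_dominator:
  assumes v: "v \<in> V - {x, p, q} - D" and u: "u \<in> D" "adj E u v"
  shows "u \<in> trim_in D"
proof -
  have "adj E v u"
    using u(2) adj_sym by metis
  then have "\<not> stranded D u"
    using stranded_nbr_in v by blast
  moreover have "u \<noteq> x"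
    using u(2) adj_x(2) v by auto
  ultimately show ?thesis
    using u by (simp add: trim_in_def)
qed

lemma trim_in_pendant:
  assumes min: "one_minimal_pds V E D" and "x \<in> D"
    and y: "y \<in> trim_in D" and w: "w \<in> trim_in D" and pend: "pendant (delete_vertices E {x, p, q}) y w"
  shows "pendant E y w"
proof -
  have y_out: "y \<notin> {x, p, q}" and "\<not> stranded D y"
    using y p_q_notin_if_x_in[OF min \<open>x \<in> D\<close>] by (auto simp: trim_in_def)
  have "\<not> adj E y q"
  proof
    assume "adj E y q"
    moreover have "\<forall>z. adj E z y \<and> z \<noteq> q \<longleftrightarrow> z = w"
      using pend adj_delete_xpq[OF y_out] unfolding pendant_def by blast
    moreover have "w \<in> D" "y \<noteq> p"
      using w y_out by (auto simp: trim_in_def)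
    ultimately have "stranded D y"
      unfolding stranded_def by blast
    then show False
      using \<open>\<not> stranded D y\<close> by simp
  qed
  then have "\<And>z. z \<in> {x, p, q} \<Longrightarrow> \<not> adj E z y"
    using y_out adj_x(2) adj_p adj_sym[of E q y] by auto
  then show ?thesis
    using pend pendant_delete_vertices[OF y_out] by blast
qed

lemma trim_in_dominates_stranded:
  assumes min: "one_minimal_pds V E D" and "x \<in> D" and v: "v \<in> D - trim_in D - {x, p, q}"
  shows "\<exists>!u\<in>trim_in D. adj (delete_vertices E {x, p, q}) u v"
proof -
  have v_out: "v \<notin> {x, p, q}" and "v \<in> D" "stranded D v"
    using v by (auto simp: trim_in_def)
  then obtain s where s: "s \<in> D" "\<And>z. adj E z v \<and> z \<noteq> q \<longleftrightarrow> z = s" and "adj E v q"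
    unfolding stranded_def by blast
  have "s \<notin> {x, p, q}"
    using s(2)[of s] v_out p_q_notin_if_x_in[OF min \<open>x \<in> D\<close>] \<open>s \<in> D\<close> adj_x by blast
  moreover have "\<not> stranded D s"
  proof
    assume "stranded D s"
    then have "s = v"
      using q_dominator_unique[OF min \<open>x \<in> D\<close> \<open>s \<in> D\<close> _ \<open>v \<in> D\<close> \<open>adj E v q\<close>]
      by (simp add: stranded_def)
    then show False
      using s(2)[of s] simple_graph_adjD(3)[OF graph] by blast
  qed
  ultimately have "s \<in> trim_in D"
    using s(1) by (simp add: trim_in_def)
  moreover have "adj (delete_vertices E {x, p, q}) u v \<longleftrightarrow> u = s" for u
    using s(2) adj_delete_xpq[OF v_out] by blast
  ultimately show ?thesis
    by (intro ex1I[of _ s]) simp_all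
qed

lemma trim_in_minimal:
  assumes min: "one_minimal_pds V E D" and "x \<in> D"
  shows "one_minimal_pds (V - {x, p, q}) (delete_vertices E {x, p, q}) (trim_in D)"
proof (rule one_minimal_pds_restrict[OF graph min])
  show "trim_in D \<subseteq> D - {x, p, q}"
    using p_q_notin_if_x_in[OF assms] by (auto simp: trim_in_def)
  show "u \<in> trim_in D" if "v \<in> V - {x, p, q} - D" "u \<in> D" "adj E u v" for u v
    using trim_in_dominator that .
  show "pendant E y w"
    if "y \<in> trim_in D" "w \<in> trim_in D" "pendant (delete_vertices E {x, p, q}) y w" for y w
    using trim_in_pendant[OF assms that] .
  show "\<exists>!u\<in>trim_in D. adj (delete_vertices E {x, p, q}) u v" if "v \<in> D - trim_in D - {x, p, q}" for v
    using trim_in_dominates_stranded[OF assms that] .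
qed

end

locale reducible_pendant_path = pendant_path +
  assumes unique_branch: "\<And>r r'. adj E r q \<Longrightarrow> adj E r' q \<Longrightarrow> r \<noteq> p \<Longrightarrow> r' \<noteq> p \<Longrightarrow>
    \<not> pendant E r q \<Longrightarrow> \<not> pendant E r' q \<Longrightarrow> r = r'"
begin

text \<open>If no vertex of D still dominates q, the removed one is the unique stranded vertex, by
  unique_branch.\<close>
definition untrim_in :: "'a set \<Rightarrow> 'a set" where
  "untrim_in D = insert x (D \<union> (if \<exists>r\<in>D. adj E r q then {} else {r. stranded D r}))"

lemma stranded_trim_in:
  assumes r: "stranded D r" "r \<noteq> x" and trim: "trim_in D = D - {x, r}"
  shows "{r'. stranded (trim_in D) r'} = {r}"
proof -
  have rq: "adj E r q" "r \<noteq> p"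
    using r(1) by (simp_all add: stranded_def)
  obtain s where s: "s \<in> D" "\<And>z. adj E z r \<and> z \<noteq> q \<longleftrightarrow> z = s"
    using r(1) unfolding stranded_def by blast
  have "adj E s r"
    using s(2)[of s] by simp
  then have "s \<noteq> x" "s \<noteq> r"
    using adj_x(2)[of r] rq(2) simple_graph_adjD(3)[OF graph] by auto
  then have "stranded (trim_in D) r"
    using rq s trim unfolding stranded_def by blast
  moreover have "r' = r" if "stranded (trim_in D) r'" for r'
  proof -
    have "adj E r' q" "r' \<noteq> p"
      using that by (simp_all add: stranded_def)
    then show ?thesis
      using unique_branch[of r' r] stranded_not_pendant[OF that] stranded_not_pendant[OF r(1)] rq by blast
  qed
  ultimately show ?thesis
    by blast
qed

lemma untrim_trim_in:
  assumes min: "one_minimal_pds V E D" and "x \<in> D"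
  shows "untrim_in (trim_in D) = D"
proof -
  note pq = p_q_notin_if_x_in[OF min \<open>x \<in> D\<close>]
  obtain r where r: "r \<in> D" "adj E r q"
    using one_minimal_pds_dominatorE[OF min _ pq(2)] xpq_in_V by metis
  have r_ne: "r \<noteq> x" "r \<noteq> p"
    using r adj_x(2)[of q] distinct_xpq(2) pq(1) by auto
  have only_r: "r' = r" if "r' \<in> D" "adj E r' q" for r'
    using q_dominator_unique[OF min \<open>x \<in> D\<close> that r] .
  show ?thesis
  proof (cases "stranded D r")
    case False
    then have "{r' \<in> D. stranded D r'} = {}"
      using only_r unfolding stranded_def by blast
    then have "trim_in D = D - {x}"
      by (metis Diff_empty trim_in_def)
    moreover have "r \<in> D - {x}"
      using r r_ne by simp
    ultimately show ?thesis
      using r(2) \<open>x \<in> D\<close> by (auto simp: untrim_in_def)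
  next
    case True
    then have "{r' \<in> D. stranded D r'} = {r}"
      using only_r r(1) unfolding stranded_def by blast
    then have trim: "trim_in D = D - {x, r}"
      by (auto simp: trim_in_def)
    moreover have "\<not> (\<exists>r'\<in>trim_in D. adj E r' q)"
      using only_r trim by blast
    ultimately show ?thesis
      using stranded_trim_in[OF True r_ne(1) trim] r(1) \<open>x \<in> D\<close> by (auto simp: untrim_in_def)
  qed
qed

lemma inj_on_trim_in: "inj_on trim_in {D. one_minimal_pds V E D \<and> x \<in> D}"
  by (rule inj_on_inverseI[of _ untrim_in]) (simp add: untrim_trim_in)

lemma num_mpds_branch_le:
  "num_mpds V E \<le> num_mpds (V - {x}) (delete_vertices E {x})
     + num_mpds (V - {x, p, q}) (delete_vertices E {x, p, q})"
proof (rule card_le_sum_by_cases[where P = "\<lambda>D. x \<notin> D"])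
  have "finite V"
    using graph by (simp add: simple_graph_def)
  then show "finite {D. one_minimal_pds (V - {x}) (delete_vertices E {x}) D}"
    "finite {D. one_minimal_pds (V - {x, p, q}) (delete_vertices E {x, p, q}) D}"
    by (simp_all add: finite_one_minimal_pds)
  show "inj_on trim_out {D \<in> {D. one_minimal_pds V E D}. x \<notin> D}"
    using inj_on_trim_out by simp
  show "inj_on trim_in {D \<in> {D. one_minimal_pds V E D}. \<not> x \<notin> D}"
    using inj_on_trim_in by simp
  show "trim_out ` {D \<in> {D. one_minimal_pds V E D}. x \<notin> D}
      \<subseteq> {D. one_minimal_pds (V - {x}) (delete_vertices E {x}) D}"
    using trim_out_minimal by blast
  show "trim_in ` {D \<in> {D. one_minimal_pds V E D}. \<not> x \<notin> D}
      \<subseteq> {D. one_minimal_pds (V - {x, p, q}) (delete_vertices E {x, p, q}) D}"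
    using trim_in_minimal by blast
qed

end

section \<open>Graphs of pathwidth one\<close>

lemma path_decomposition_delete_vertices:
  assumes decomp: "path_decomposition V E bs k" and "finite V"
  shows "path_decomposition (V - S) (delete_vertices E S) (map (\<lambda>B. B - S) bs) k"
proof -
  note parts = decomp[unfolded path_decomposition_def]
  have bags: "\<forall>B\<in>set bs. B \<subseteq> V \<and> card B \<le> k + 1"
    using conjunct1[OF parts] .
  have cover: "V \<subseteq> \<Union> (set bs)"
    using conjunct1[OF conjunct2[OF parts]] .
  have edges: "\<forall>e\<in>E. \<exists>B\<in>set bs. e \<subseteq> B"
    using conjunct1[OF conjunct2[OF conjunct2[OF parts]]] .
  have convex: "\<forall>v i j l. i \<le> j \<and> j \<le> l \<and> l < length bs \<and> v \<in> bs ! i \<and> v \<in> bs ! l \<longrightarrow> v \<in> bs ! j"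
    using conjunct2[OF conjunct2[OF conjunct2[OF parts]]] .
  show ?thesis
    unfolding path_decomposition_def
  proof (intro conjI allI impI ballI)
    fix B' assume "B' \<in> set (map (\<lambda>B. B - S) bs)"
    then obtain B where B: "B \<in> set bs" "B' = B - S"
      by auto
    then have "B \<subseteq> V" "card B \<le> k + 1"
      using bags by auto
    then show "B' \<subseteq> V - S" "card B' \<le> k + 1"
      using B(2) card_mono[OF finite_subset[OF _ \<open>finite V\<close>], of B "B - S"] by auto
  next
    show "V - S \<subseteq> \<Union> (set (map (\<lambda>B. B - S) bs))"
      using cover by auto
  next
    fix e assume "e \<in> delete_vertices E S"
    then have "e \<in> E" "e \<inter> S = {}"
      by (simp_all add: delete_vertices_def)
    then obtain B where "B \<in> set bs" "e \<subseteq> B"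
      using edges by blast
    then show "\<exists>B'\<in>set (map (\<lambda>B. B - S) bs). e \<subseteq> B'"
      using \<open>e \<inter> S = {}\<close> by (intro bexI[of _ "B - S"]) auto
  next
    fix v i j l
    assume h: "i \<le> j \<and> j \<le> l \<and> l < length (map (\<lambda>B. B - S) bs)
      \<and> v \<in> map (\<lambda>B. B - S) bs ! i \<and> v \<in> map (\<lambda>B. B - S) bs ! l"
    then have "i < length bs" "j < length bs" "l < length bs"
      by auto
    with h have "v \<in> bs ! i" "v \<in> bs ! l" "v \<notin> S"
      by auto
    then have "v \<in> bs ! j"
      using convex h \<open>l < length bs\<close> by blast
    then show "v \<in> map (\<lambda>B. B - S) bs ! j"
      using \<open>v \<notin> S\<close> \<open>j < length bs\<close> by simp
  qed
qed

locale pathwidth1 =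
  fixes V :: "'a set" and E :: "'a set set" and bs :: "'a set list"
  assumes graph: "simple_graph V E" and decomp: "path_decomposition V E bs 1"
begin

definition in_bag :: "'a \<Rightarrow> nat \<Rightarrow> bool" where
  "in_bag v i \<longleftrightarrow> i < length bs \<and> v \<in> bs ! i"

definition last_bag :: "'a \<Rightarrow> nat" where
  "last_bag v = Max {i. in_bag v i}"

lemma in_bag_convex: "in_bag v i \<Longrightarrow> in_bag v l \<Longrightarrow> i \<le> j \<Longrightarrow> j \<le> l \<Longrightarrow> in_bag v j"
  using decomp unfolding path_decomposition_def in_bag_def by (meson le_less_trans)

lemma in_bag_at_most_two: "in_bag a i \<Longrightarrow> in_bag b i \<Longrightarrow> in_bag c i \<Longrightarrow> a = b \<or> a = c \<or> b = c"
proof (rule ccontr)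
  assume in_i: "in_bag a i" "in_bag b i" "in_bag c i" and "\<not> (a = b \<or> a = c \<or> b = c)"
  then have "card {a, b, c} = 3"
    by auto
  have "bs ! i \<in> set bs"
    using in_i(1) unfolding in_bag_def by simp
  then have "bs ! i \<subseteq> V" "card (bs ! i) \<le> 2"
    using decomp unfolding path_decomposition_def by auto
  moreover have "finite V"
    using graph by (simp add: simple_graph_def)
  moreover have "{a, b, c} \<subseteq> bs ! i"
    using in_i unfolding in_bag_def by auto
  ultimately have "card {a, b, c} \<le> 2"
    by (meson card_mono finite_subset le_trans)
  then show False
    using \<open>card {a, b, c} = 3\<close> by simp
qed

lemma adj_in_bag: "adj E u v \<Longrightarrow> \<exists>j. in_bag u j \<and> in_bag v j"
  using decomp unfolding path_decomposition_def in_bag_def adj_def by (metis in_set_conv_nth insert_subset)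

lemma in_bag_in_V: "in_bag v i \<Longrightarrow> v \<in> V"
  using decomp unfolding path_decomposition_def in_bag_def by (meson nth_mem subsetD)

lemma in_last_bag: "v \<in> V \<Longrightarrow> in_bag v (last_bag v)"
  and le_last_bag: "in_bag v i \<Longrightarrow> i \<le> last_bag v"
proof -
  have fin: "finite {i. in_bag v i}"
    by (rule finite_subset[of _ "{..<length bs}"]) (auto simp: in_bag_def)
  show "i \<le> last_bag v" if "in_bag v i"
    unfolding last_bag_def using Max_ge[OF fin] that by simp
  assume "v \<in> V"
  then obtain i where "in_bag v i"
    using decomp unfolding path_decomposition_def in_bag_def by (metis UnionE in_set_conv_nth subsetD)
  then show "in_bag v (last_bag v)"
    unfolding last_bag_def using Max_in[OF fin] by blast
qed

lemma no_edge_across: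
  assumes "in_bag w i" "in_bag w l" "i \<le> j" "j \<le> l" "in_bag a j" "in_bag b j"
    and "a \<noteq> b" "a \<noteq> w" "b \<noteq> w"
  shows False
  using in_bag_at_most_two[OF assms(5,6) in_bag_convex[OF assms(1-4)]] assms(7-9) by blast

end

locale pathwidth1_first = pathwidth1 +
  fixes x :: 'a
  assumes x_in: "x \<in> V" and x_first: "\<And>y. y \<in> V \<Longrightarrow> last_bag x \<le> last_bag y"
begin

lemma in_bag_up_to_first: "in_bag y j \<Longrightarrow> j \<le> last_bag x \<Longrightarrow> in_bag y (last_bag x)"
  using in_bag_convex in_last_bag in_bag_in_V x_first by blast

lemma adj_first_in_bag: "adj E y x \<Longrightarrow> in_bag y (last_bag x)"
  using adj_in_bag in_bag_up_to_first le_last_bag by blast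

lemma first_nbr_unique: "adj E y x \<Longrightarrow> adj E z x \<Longrightarrow> y = z"
  using in_bag_at_most_two[OF adj_first_in_bag adj_first_in_bag in_last_bag[OF x_in]]
    simple_graph_adjD(3)[OF graph] by blast

text \<open>Bag last_bag x is {x, p} and every bag up to last_bag p contains p, so two vertices other
  than p, one of them not x, can only share a later bag.\<close>
lemma edge_beyond_nbr:
  assumes "adj E p x" "in_bag a j" "in_bag b j" "a \<noteq> b" "a \<noteq> p" "b \<noteq> p" "a \<noteq> x"
  shows "last_bag p < j"
proof (rule ccontr)
  assume "\<not> last_bag p < j"
  have p_in: "in_bag p (last_bag x)" "in_bag p (last_bag p)"
    using adj_first_in_bag[OF assms(1)] in_last_bag simple_graph_adjD(1)[OF graph assms(1)] by blast+
  show False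
  proof (cases "j \<le> last_bag x")
    case True
    then show False
      using in_bag_at_most_two[OF in_bag_up_to_first[OF assms(2)] p_in(1) in_last_bag[OF x_in]]
        simple_graph_adjD(3)[OF graph assms(1)] assms(5,7) by blast
  next
    case False
    then show False
      using no_edge_across[OF p_in _ _ assms(2,3)] \<open>\<not> last_bag p < j\<close> assms(4-6) by simp
  qed
qed

lemma nonleaf_nbr_in_last_bag:
  assumes "adj E p x" "adj E y p" "y \<noteq> x" "adj E z y" "z \<noteq> p"
  shows "in_bag y (last_bag p)"
proof -
  obtain j where j: "in_bag y j" "in_bag z j"
    using adj_in_bag assms(4) adj_sym by metis
  obtain j' where j': "in_bag y j'" "in_bag p j'"
    using adj_in_bag assms(2) by blast
  have "last_bag p < j"
    using edge_beyond_nbr[OF assms(1) j] assms simple_graph_adjD(3)[OF graph] by metis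
  then show ?thesis
    using in_bag_convex[OF j'(1) j(1)] le_last_bag[OF j'(2)] by simp
qed

lemma branch_in_last_bag:
  assumes px: "adj E p x" and qp: "adj E q p" "q \<noteq> x" "in_bag q (last_bag p)"
    and p_nbrs: "\<And>z. adj E z p \<Longrightarrow> z = x \<or> z = q"
    and rq: "adj E r q" "r \<noteq> p" and zr: "adj E z r" "z \<noteq> q"
  shows "in_bag r (last_bag q)"
proof -
  have distinct: "r \<noteq> q" "r \<noteq> z" "r \<noteq> x" "z \<noteq> p"
    using simple_graph_adjD(3)[OF graph] rq zr first_nbr_unique[of q p] px qp p_nbrs adj_sym
    by metis+
  obtain j where j: "in_bag r j" "in_bag z j"
    using adj_in_bag zr(1) adj_sym by metis
  obtain j' where j': "in_bag r j'" "in_bag q j'"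
    using adj_in_bag rq(1) by blast
  have "last_bag p < j"
    using edge_beyond_nbr[OF px j] distinct rq(2) by metis
  have "j' < j"
  proof (rule ccontr)
    assume "\<not> j' < j"
    then show False
      using no_edge_across[OF qp(3) j'(2) _ _ j] \<open>last_bag p < j\<close> distinct zr(2) by simp
  qed
  moreover have "last_bag q < j"
  proof (rule ccontr)
    assume "\<not> last_bag q < j"
    then show False
      using no_edge_across[OF j'(2) in_last_bag[OF in_bag_in_V[OF j'(2)]] _ _ j]
        \<open>j' < j\<close> distinct zr(2) by simp
  qed
  ultimately show ?thesis
    using in_bag_convex[OF j'(1) j(1)] le_last_bag[OF j'(2)] by simp
qed

lemma reducible_pendant_path_if_nonleaf_nbrs:
  assumes px: "adj E p x" and qp: "adj E q p" "q \<noteq> x"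
    and nonleaf: "\<And>y. adj E y p \<Longrightarrow> y \<noteq> x \<Longrightarrow> \<not> pendant E y p"
  shows "reducible_pendant_path V E x p q"
proof -
  have in_last_p: "in_bag y (last_bag p)" if "adj E y p" "y \<noteq> x" for y
    using nonleaf_nbr_in_last_bag[OF px that] other_nbr_if_not_pendant[OF _ nonleaf[OF that]]
      that(1) adj_sym by metis
  have p_nbrs: "z = x \<or> z = q" if "adj E z p" for z
    using in_bag_at_most_two[OF in_last_p[OF that] in_last_p[OF qp] in_last_bag]
      simple_graph_adjD[OF graph] that qp by blast
  show ?thesis
  proof unfold_locales
    show "pendant E x p"
      using first_nbr_unique px unfolding pendant_def by blast
    show "adj E z p \<longleftrightarrow> z = x \<or> z = q" for z
      using p_nbrs px qp(1) adj_sym by metis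
    fix r r' assume rq: "adj E r q" "adj E r' q" and "r \<noteq> p" "r' \<noteq> p"
      and "\<not> pendant E r q" "\<not> pendant E r' q"
    then have "in_bag r (last_bag q)" "in_bag r' (last_bag q)"
      using branch_in_last_bag[OF px qp in_last_p[OF qp] p_nbrs] other_nbr_if_not_pendant adj_sym
      by metis+
    then show "r = r'"
      using in_bag_at_most_two[OF _ _ in_last_bag] simple_graph_adjD[OF graph] rq by metis
  qed (use graph qp in simp_all)
qed

lemma first_vertex_configuration:
  "(\<forall>z. \<not> adj E z x) \<or> (\<exists>p. pendant E x p \<and> pendant E p x)
    \<or> (\<exists>x' p. x \<noteq> x' \<and> pendant E x p \<and> pendant E x' p) \<or> (\<exists>p q. reducible_pendant_path V E x p q)"
proof (cases "\<exists>p. adj E p x")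
  case True
  then obtain p where px: "adj E p x"
    by blast
  have leaf: "pendant E x p"
    using first_nbr_unique px unfolding pendant_def by blast
  show ?thesis
  proof (cases "\<exists>q. adj E q p \<and> q \<noteq> x")
    case False
    then have "pendant E p x"
      using px adj_sym unfolding pendant_def by metis
    then show ?thesis
      using leaf by (intro disjI2 disjI1) blast
  next
    case True
    then obtain q where q: "adj E q p" "q \<noteq> x"
      by blast
    show ?thesis
    proof (cases "\<exists>y. adj E y p \<and> y \<noteq> x \<and> pendant E y p")
      case True
      then obtain y where "y \<noteq> x" "pendant E y p"
        by blast
      then have "x \<noteq> y \<and> pendant E x p \<and> pendant E y p"
        using leaf by auto
      then show ?thesis
        by (intro disjI2 disjI1) blast
    next
      case False
      then have "reducible_pendant_path V E x p q"
        using reducible_pendant_path_if_nonleaf_nbrs[OF px q] by blast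
      then show ?thesis
        by blast
    qed
  qed
qed simp

end

lemma (in pathwidth1) reducible_configuration:
  assumes "V \<noteq> {}"
  shows "(\<exists>x\<in>V. \<forall>z. \<not> adj E z x) \<or> (\<exists>x p. pendant E x p \<and> pendant E p x)
    \<or> (\<exists>x x' p. x \<noteq> x' \<and> pendant E x p \<and> pendant E x' p) \<or> (\<exists>x p q. reducible_pendant_path V E x p q)"
proof -
  have "finite V"
    using graph by (simp add: simple_graph_def)
  define x where "x = arg_min_on last_bag V"
  have "x \<in> V" "\<And>y. y \<in> V \<Longrightarrow> last_bag x \<le> last_bag y"
    unfolding x_def using arg_min_if_finite(1) arg_min_least[of V] \<open>finite V\<close> assms by auto
  then interpret pathwidth1_first V E bs x
    by unfold_locales
  from first_vertex_configuration show ?thesis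
    using \<open>x \<in> V\<close> by (elim disjE) blast+
qed

lemma (in pathwidth1) num_mpds_reduction:
  assumes "V \<noteq> {}"
  obtains (vertex) x where "x \<in> V" "num_mpds V E \<le> num_mpds (V - {x}) (delete_vertices E {x})"
  | (edge) x p where "x \<in> V" "p \<in> V" "x \<noteq> p"
      "num_mpds V E \<le> 2 * num_mpds (V - {x, p}) (delete_vertices E {x, p})"
  | (branch) x p q where "x \<in> V" "p \<in> V" "q \<in> V" "x \<noteq> p" "p \<noteq> q" "q \<noteq> x"
      "num_mpds V E \<le> num_mpds (V - {x}) (delete_vertices E {x})
         + num_mpds (V - {x, p, q}) (delete_vertices E {x, p, q})"
proof -
  consider x where "x \<in> V" "\<forall>z. \<not> adj E z x" | x p where "pendant E x p" "pendant E p x"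
    | x x' p where "x \<noteq> x'" "pendant E x p" "pendant E x' p" | x p q where "reducible_pendant_path V E x p q"
    using reducible_configuration[OF assms] by blast
  then show ?thesis
  proof cases
    case (1 x)
    then show ?thesis
      using num_mpds_isolated_le[OF graph] vertex by blast
  next
    case (2 x p)
    then have "x \<in> V" "p \<in> V" "x \<noteq> p"
      using simple_graph_adjD[OF graph] pendant_adj by metis+
    then show ?thesis
      using num_mpds_edge_component_le[OF graph 2] edge by blast
  next
    case (3 x x' p)
    then have "x' \<in> V"
      using simple_graph_adjD(2)[OF graph] pendant_adj adj_sym by metis
    then show ?thesis
      using num_mpds_twin_leaves_le[OF graph 3(2,3,1)] vertex by blast
  next
    case (4 x p q)
    then interpret reducible_pendant_path V E x p q .
    show ?thesis
      using branch xpq_in_V distinct_xpq num_mpds_branch_le by blast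
  qed
qed

lemma alpha_power_recurrence:
  fixes \<alpha> :: real
  assumes "\<alpha> ^ 3 - \<alpha> ^ 2 - 1 = 0"
  shows "\<alpha> ^ (n + 3) = \<alpha> ^ (n + 2) + \<alpha> ^ n"
proof -
  have "\<alpha> ^ (n + 3) = \<alpha> ^ n * \<alpha> ^ 3"
    by (simp add: power_add)
  also have "\<dots> = \<alpha> ^ n * (\<alpha> ^ 2 + 1)"
    using assms by simp
  also have "\<dots> = \<alpha> ^ (n + 2) + \<alpha> ^ n"
    by (simp only: power_add distrib_left mult_1_right)
  finally show ?thesis .
qed

lemma alpha_squared_ge_two:
  fixes \<alpha> :: real
  assumes "\<alpha> ^ 3 - \<alpha> ^ 2 - 1 = 0" "1 < \<alpha>"
  shows "2 \<le> \<alpha> ^ 2"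
proof (rule ccontr)
  assume "\<not> 2 \<le> \<alpha> ^ 2"
  have "\<alpha> ^ 2 * (\<alpha> - 1) = 1"
    using assms(1) by (simp add: algebra_simps power3_eq_cube power2_eq_square)
  moreover have "\<alpha> ^ 2 * (\<alpha> - 1) < 2 * (\<alpha> - 1)"
    using \<open>\<not> 2 \<le> \<alpha> ^ 2\<close> assms(2) by (intro mult_strict_right_mono) auto
  ultimately have "1 < 2 * (\<alpha> - 1)"
    by simp
  then have "\<alpha> - 1 > 1 / 2"
    by simp
  then have "(3 / 2) ^ 2 \<le> \<alpha> ^ 2"
    by (intro power_mono) auto
  then show False
    using \<open>\<not> 2 \<le> \<alpha> ^ 2\<close> by (simp add: power2_eq_square)
qed

lemma alpha_power_steps:
  fixes \<alpha> :: real
  assumes \<alpha>: "\<alpha> ^ 3 - \<alpha> ^ 2 - 1 = 0" "1 < \<alpha>"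
  shows "\<alpha> ^ (n - 1) \<le> \<alpha> ^ n"
    and "2 \<le> n \<Longrightarrow> 2 * \<alpha> ^ (n - 2) \<le> \<alpha> ^ n"
    and "3 \<le> n \<Longrightarrow> \<alpha> ^ (n - 1) + \<alpha> ^ (n - 3) = \<alpha> ^ n"
proof -
  show "\<alpha> ^ (n - 1) \<le> \<alpha> ^ n"
    using \<alpha>(2) by (intro power_increasing) auto
  show "2 * \<alpha> ^ (n - 2) \<le> \<alpha> ^ n" if "2 \<le> n"
  proof -
    have "2 * \<alpha> ^ (n - 2) \<le> \<alpha> ^ 2 * \<alpha> ^ (n - 2)"
      using alpha_squared_ge_two[OF \<alpha>] \<alpha>(2) by (intro mult_right_mono) simp_all
    also have "\<dots> = \<alpha> ^ n"
      using that by (metis power_add le_add_diff_inverse)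
    finally show ?thesis .
  qed
  show "\<alpha> ^ (n - 1) + \<alpha> ^ (n - 3) = \<alpha> ^ n" if "3 \<le> n"
  proof -
    define m where "m = n - 3"
    have "n - 1 = m + 2" "n - 3 = m" "n = m + 3"
      using that by (simp_all add: m_def)
    then show ?thesis
      using alpha_power_recurrence[OF \<alpha>(1), of m] by simp
  qed
qed

lemma num_mpds_empty: "num_mpds {} E = 1"
proof -
  have "{D. one_minimal_pds {} E D} = {{}}"
    by (auto simp: one_minimal_pds_def perfect_dominating_def)
  then show ?thesis
    by simp
qed

lemma num_mpds_pathwidth1_le:
  fixes \<alpha> :: real
  assumes \<alpha>: "\<alpha> ^ 3 - \<alpha> ^ 2 - 1 = 0" "1 < \<alpha>"
  shows "simple_graph V E \<Longrightarrow> path_decomposition V E bs 1 \<Longrightarrow> num_mpds V E \<le> \<alpha> ^ card V"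
proof (induction "card V" arbitrary: V E bs rule: less_induct)
  case less
  interpret pathwidth1 V E bs
    using less.prems by unfold_locales
  have fin: "finite V"
    using graph by (simp add: simple_graph_def)
  have IH: "num_mpds (V - S) (delete_vertices E S) \<le> \<alpha> ^ (card V - card S)"
    if "S \<subseteq> V" "S \<noteq> {}" for S
  proof -
    have "card (V - S) < card V"
      using that by (intro psubset_card_mono[OF fin]) blast
    then have "num_mpds (V - S) (delete_vertices E S) \<le> \<alpha> ^ card (V - S)"
      using less.hyps simple_graph_delete_vertices[OF graph]
        path_decomposition_delete_vertices[OF decomp fin] by blast
    then show ?thesis
      using card_Diff_subset[OF finite_subset[OF that(1) fin] that(1)] by simp
  qed
  show ?case
  proof (cases "V = {}")
    case False
    then show ?thesis
    proof (cases rule: num_mpds_reduction)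
      case (vertex x)
      then show ?thesis
        using IH[of "{x}"] alpha_power_steps(1)[OF \<alpha>, of "card V"] by simp
    next
      case (edge x p)
      have "real (num_mpds V E) \<le> 2 * \<alpha> ^ (card V - 2)"
        using IH[of "{x, p}"] edge by (simp add: numeral_2_eq_2)
      also have "\<dots> \<le> \<alpha> ^ card V"
        using card_mono[OF fin, of "{x, p}"] edge by (intro alpha_power_steps(2)[OF \<alpha>]) simp
      finally show ?thesis .
    next
      case (branch x p q)
      have "real (num_mpds V E) \<le> \<alpha> ^ (card V - 1) + \<alpha> ^ (card V - 3)"
        using IH[of "{x}"] IH[of "{x, p, q}"] branch by (simp add: numeral_3_eq_3 flip: of_nat_add)
      also have "\<dots> = \<alpha> ^ card V"
        using card_mono[OF fin, of "{x, p, q}"] branch by (intro alpha_power_steps(3)[OF \<alpha>]) simp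
      finally show ?thesis .
    qed
  qed (simp add: num_mpds_empty)
qed

theorem card_one_minimal_pds_pathwidth1_le:
  fixes \<alpha> :: real
  assumes "\<alpha> ^ 3 - \<alpha> ^ 2 - 1 = 0" "1 < \<alpha>"
    and "simple_graph V E" "pathwidth_at_most V E 1"
  shows "real (card {D. one_minimal_pds V E D}) \<le> \<alpha> ^ card V"
  using assms num_mpds_pathwidth1_le unfolding pathwidth_at_most_def by blast

section \<open>Paths\<close>

locale long_pendant_path = pendant_path +
  fixes r s t :: 'a
  assumes q_nbrs: "\<And>z. adj E z q \<longleftrightarrow> z = p \<or> z = r" and r_nbrs: "\<And>z. adj E z r \<longleftrightarrow> z = q \<or> z = s"
    and r_ne_p: "r \<noteq> p" and s_ne_q: "s \<noteq> q" and t_s: "adj E t s" and t_ne_r: "t \<noteq> r"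
begin

lemma adj_q: "adj E q z \<longleftrightarrow> z = p \<or> z = r" and adj_r: "adj E r z \<longleftrightarrow> z = q \<or> z = s"
  using q_nbrs r_nbrs adj_sym by metis+

lemma distinct_rs: "r \<noteq> x" "r \<noteq> q" "s \<noteq> x" "s \<noteq> p" "s \<noteq> r"
proof -
  have rq: "adj E r q" and sr: "adj E s r"
    using q_nbrs r_nbrs by simp_all
  show "r \<noteq> x" "r \<noteq> q" "s \<noteq> r"
    using rq sr adj_x(2)[of q] distinct_xpq(2) simple_graph_adjD(3)[OF graph] by auto
  show "s \<noteq> x" "s \<noteq> p"
    using sr adj_x(2)[of r] adj_p[of r] r_ne_p \<open>r \<noteq> x\<close> \<open>r \<noteq> q\<close> by auto
qed

lemma rs_in_V: "r \<in> V" "s \<in> V"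
  using simple_graph_adjD[OF graph] adj_r by metis+

lemma p_in_iff_q_notin:
  assumes min': "one_minimal_pds (V - {x}) (delete_vertices E {x}) D'"
  shows "p \<in> D' \<longleftrightarrow> q \<notin> D'"
proof -
  have graph': "simple_graph (V - {x}) (delete_vertices E {x})"
    by (rule simple_graph_delete_vertices[OF graph])
  have del_p: "adj (delete_vertices E {x}) z p \<longleftrightarrow> z = q" for z
    using p_nbrs distinct_xpq by (auto simp: adj_delete_vertices)
  have "q \<notin> D'" if "p \<in> D'"
    using one_minimal_pds_not_pendant[OF graph' min' that, of q] del_p unfolding pendant_def by blast
  moreover have "q \<in> D'" if p_out: "p \<notin> D'"
  proof -
    have "p \<in> V - {x}"
      using xpq_in_V distinct_xpq by blast
    then obtain u where "u \<in> D'" "adj (delete_vertices E {x}) u p"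
      using one_minimal_pds_dominatorE[OF min' _ p_out] by blast
    then show ?thesis
      by (simp add: del_p)
  qed
  ultimately show ?thesis
    by blast
qed

lemma r_in_iff_s_notin:
  assumes min': "one_minimal_pds (V - {x, p, q}) (delete_vertices E {x, p, q}) D'"
  shows "r \<in> D' \<longleftrightarrow> s \<notin> D'"
proof -
  have graph': "simple_graph (V - {x, p, q}) (delete_vertices E {x, p, q})"
    by (rule simple_graph_delete_vertices[OF graph])
  have r_out: "r \<notin> {x, p, q}"
    using distinct_rs r_ne_p by auto
  have del_r: "adj (delete_vertices E {x, p, q}) z r \<longleftrightarrow> z = s" for z
    using adj_delete_xpq[OF r_out] r_nbrs s_ne_q by auto
  have "s \<notin> D'" if "r \<in> D'"
    using one_minimal_pds_not_pendant[OF graph' min' that, of s] del_r unfolding pendant_def by blast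
  moreover have "s \<in> D'" if r_out': "r \<notin> D'"
  proof -
    have "r \<in> V - {x, p, q}"
      using rs_in_V r_out by blast
    then obtain u where "u \<in> D'" "adj (delete_vertices E {x, p, q}) u r"
      using one_minimal_pds_dominatorE[OF min' _ r_out'] by blast
    then show ?thesis
      by (simp add: del_r)
  qed
  ultimately show ?thesis
    by blast
qed

lemma p_not_pendant: "\<not> pendant E p w"
  using not_pendant_if_two_neighbours[of E x p q] adj_x adj_p distinct_xpq adj_sym by metis

lemma r_not_pendant: "\<not> pendant E r w"
  using not_pendant_if_two_neighbours[of E q r s] r_nbrs s_ne_q by metis

lemma extend_out_pendant:
  assumes "x \<notin> D'" and y: "y \<in> D'" and w: "w \<in> insert p D'" and pend: "pendant E y w"
  shows "w \<in> D' \<and> pendant (delete_vertices E {x}) y w"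
proof -
  have "y \<noteq> p"
    using p_not_pendant pend by blast
  then have no_x: "\<And>z. z \<in> {x} \<Longrightarrow> \<not> adj E z y"
    using adj_x by auto
  have y_out: "y \<notin> {x}"
    using y \<open>x \<notin> D'\<close> by blast
  have "\<not> pendant E q w'" for w'
    using not_pendant_if_two_neighbours[of E p q r] q_nbrs r_ne_p by metis
  then have "w \<noteq> p"
    using pend adj_p pendant_adj[OF pend] y \<open>x \<notin> D'\<close> by (metis adj_sym)
  moreover have "pendant (delete_vertices E {x}) y w"
    using pend pendant_delete_vertices[OF y_out no_x] by simp
  ultimately show ?thesis
    using w by blast
qed

lemma extend_out_minimal:
  assumes min': "one_minimal_pds (V - {x}) (delete_vertices E {x}) D'"
  shows "one_minimal_pds V E (insert p D')"
proof (rule one_minimal_pds_extend[OF graph min'])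
  have "x \<notin> D'"
    using one_minimal_pds_subset[OF min'] by blast
  show "D' \<subseteq> insert p D'"
    by blast
  show "insert p D' \<subseteq> V"
    using one_minimal_pds_subset[OF min'] xpq_in_V by blast
  show "u \<in> D'" if "v \<in> V - {x} - insert p D'" "u \<in> insert p D'" "adj E u v" for u v
    using that adj_p p_in_iff_q_notin[OF min'] by auto
  show "w \<in> D' \<and> pendant (delete_vertices E {x}) y w"
    if "y \<in> D'" "w \<in> insert p D'" "pendant E y w" for y w
    using extend_out_pendant[OF \<open>x \<notin> D'\<close> that] .
  show "mpds_at E (insert p D') v" if "v \<in> V \<inter> ({x} \<union> (insert p D' - D'))" for v
  proof -
    have "x \<notin> insert p D'"
      using \<open>x \<notin> D'\<close> distinct_xpq by simp
    moreover have "v = x \<or> v = p"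
      using that by blast
    ultimately show ?thesis
      using mpds_at_dominatedI[of x "insert p D'" p E] mpds_at_outside_nbrI[of p "insert p D'" E x]
      by (auto simp: adj_x)
  qed
qed

lemma extend_in_pendant:
  assumes D'_out: "x \<notin> D'" "p \<notin> D'" "q \<notin> D'"
    and y: "y \<in> D'" and w: "w \<in> insert x (insert r D')" and pend: "pendant E y w"
  shows "w \<in> D' \<and> pendant (delete_vertices E {x, p, q}) y w"
proof -
  have "y \<noteq> r"
    using r_not_pendant pend by blast
  then have no_S: "\<And>z. z \<in> {x, p, q} \<Longrightarrow> \<not> adj E z y"
    using y D'_out adj_x adj_p adj_q by auto
  have y_out: "y \<notin> {x, p, q}"
    using y D'_out by blast
  have "\<not> pendant E s r"
    using not_pendant_if_two_neighbours[of E r s t] adj_r t_s t_ne_r by metis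
  then have "w \<noteq> r \<or> r \<in> D'"
    using pend pendant_adj[OF pend] adj_r y D'_out by (metis adj_sym)
  moreover have "w \<noteq> x"
    using pendant_adj[OF pend] adj_x y D'_out by auto
  moreover have "pendant (delete_vertices E {x, p, q}) y w"
    using pend pendant_delete_vertices[OF y_out no_S] by simp
  ultimately show ?thesis
    using w by blast
qed

lemma mpds_at_extend_in:
  assumes D'_out: "x \<notin> D'" "p \<notin> D'" "q \<notin> D'" and v: "v \<in> {x, p, q, r}"
  shows "mpds_at E (insert x (insert r D')) v"
proof -
  have pq_out: "p \<notin> insert x (insert r D')" "q \<notin> insert x (insert r D')"
    using D'_out distinct_xpq distinct_rs r_ne_p by auto
  consider "v = x" | "v = p" | "v = q" | "v = r"
    using v by blast
  then show ?thesis
  proof cases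
    case 1
    then show ?thesis
      using mpds_at_outside_nbrI[of x "insert x (insert r D')" E p] adj_x pq_out by simp
  next
    case 2
    then show ?thesis
      using mpds_at_dominatedI[of p "insert x (insert r D')" x E] pq_out p_nbrs by simp
  next
    case 3
    then show ?thesis
      using mpds_at_dominatedI[of q "insert x (insert r D')" r E] pq_out q_nbrs by simp
  next
    case 4
    then show ?thesis
      using mpds_at_outside_nbrI[of r "insert x (insert r D')" E q] adj_q pq_out by simp
  qed
qed

lemma extend_in_minimal:
  assumes min': "one_minimal_pds (V - {x, p, q}) (delete_vertices E {x, p, q}) D'"
  shows "one_minimal_pds V E (insert x (insert r D'))"
proof (rule one_minimal_pds_extend[OF graph min'])
  have D'_out: "x \<notin> D'" "p \<notin> D'" "q \<notin> D'"
    using one_minimal_pds_subset[OF min'] by blast+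
  show "D' \<subseteq> insert x (insert r D')"
    by blast
  show "insert x (insert r D') \<subseteq> V"
    using one_minimal_pds_subset[OF min'] xpq_in_V rs_in_V by blast
  show "u \<in> D'" if "v \<in> V - {x, p, q} - insert x (insert r D')" "u \<in> insert x (insert r D')" "adj E u v"
    for u v
    using that adj_x adj_r r_in_iff_s_notin[OF min'] by auto
  show "w \<in> D' \<and> pendant (delete_vertices E {x, p, q}) y w"
    if "y \<in> D'" "w \<in> insert x (insert r D')" "pendant E y w" for y w
    using extend_in_pendant[OF D'_out that] .
  show "mpds_at E (insert x (insert r D')) v"
    if "v \<in> V \<inter> ({x, p, q} \<union> (insert x (insert r D') - D'))" for v
    using mpds_at_extend_in[OF D'_out] that by blast
qed

lemma num_mpds_lower:
  "num_mpds (V - {x}) (delete_vertices E {x}) + num_mpds (V - {x, p, q}) (delete_vertices E {x, p, q})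
     \<le> num_mpds V E"
proof -
  let ?G1 = "{D. one_minimal_pds (V - {x}) (delete_vertices E {x}) D}"
    and ?G3 = "{D. one_minimal_pds (V - {x, p, q}) (delete_vertices E {x, p, q}) D}"
    and ?ext = "\<lambda>D. insert x (insert r D)"
  have fin: "finite V"
    using graph by (simp add: simple_graph_def)
  have inj1: "inj_on (insert p) ?G1"
  proof (rule inj_on_inverseI[of _ trim_out])
    fix D assume "D \<in> ?G1"
    then show "trim_out (insert p D) = D"
      using p_in_iff_q_notin[of D] distinct_xpq by (auto simp: trim_out_def)
  qed
  have inj3: "inj_on ?ext ?G3"
  proof (rule inj_on_inverseI[of _ "\<lambda>D. if s \<in> D then D - {x, r} else D - {x}"])
    fix D assume D: "D \<in> ?G3"
    then have "x \<notin> D"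
      using one_minimal_pds_subset by blast
    then show "(if s \<in> ?ext D then ?ext D - {x, r} else ?ext D - {x}) = D"
      using D r_in_iff_s_notin[of D] distinct_rs by auto
  qed
  have "x \<notin> D" if "D \<in> ?G1" for D
    using that one_minimal_pds_subset by blast
  then have disjoint: "insert p ` ?G1 \<inter> ?ext ` ?G3 = {}"
    using distinct_xpq by auto
  have "finite (insert p ` ?G1)" "finite (?ext ` ?G3)"
    using fin by (simp_all add: finite_one_minimal_pds)
  then have "card ?G1 + card ?G3 = card (insert p ` ?G1 \<union> ?ext ` ?G3)"
    using card_Un_disjoint[OF _ _ disjoint] card_image[OF inj1] card_image[OF inj3] by simp
  also have "\<dots> \<le> num_mpds V E"
    using extend_out_minimal extend_in_minimal
    by (intro card_mono[OF finite_one_minimal_pds[OF fin]]) blast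
  finally show ?thesis .
qed

end

lemma adj_path_E: "adj (path_E n) u v \<longleftrightarrow> (v = Suc u \<or> u = Suc v) \<and> u < n \<and> v < n"
proof -
  have "adj (path_E n) u v \<longleftrightarrow> (\<exists>i. {u, v} = {i, Suc i} \<and> Suc i < n)"
    unfolding adj_def path_E_def by blast
  also have "\<dots> \<longleftrightarrow> (v = Suc u \<or> u = Suc v) \<and> u < n \<and> v < n"
    by (auto simp: doubleton_eq_iff)
  finally show ?thesis .
qed

lemma simple_graph_path: "simple_graph (path_V n) (path_E n)"
  unfolding simple_graph_def path_V_def path_E_def by auto

lemma pathwidth_path: "pathwidth_at_most (path_V n) (path_E n) 1"
  unfolding pathwidth_at_most_def
proof
  let ?bs = "map (\<lambda>i. {i, Suc i} \<inter> {0..<n}) [0..<n]"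
  have nth: "?bs ! i = {i, Suc i} \<inter> {0..<n}" if "i < n" for i
    using that by simp
  show "path_decomposition (path_V n) (path_E n) ?bs 1"
    unfolding path_decomposition_def
  proof (intro conjI allI impI ballI)
    fix B assume "B \<in> set ?bs"
    then obtain i where "B = {i, Suc i} \<inter> {0..<n}"
      by auto
    moreover have "card ({i, Suc i} \<inter> {0..<n}) \<le> card {i, Suc i}"
      by (rule card_mono) auto
    ultimately show "B \<subseteq> path_V n" "card B \<le> 1 + 1"
      by (auto simp: path_V_def)
  next
    show "path_V n \<subseteq> \<Union> (set ?bs)"
      by (auto simp: path_V_def)
  next
    fix e assume "e \<in> path_E n"
    then obtain i where "e = {i, Suc i}" "Suc i < n"
      by (auto simp: path_E_def)
    then show "\<exists>B\<in>set ?bs. e \<subseteq> B"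
      by (intro bexI[of _ "{i, Suc i} \<inter> {0..<n}"]) auto
  next
    fix v i j l
    assume h: "i \<le> j \<and> j \<le> l \<and> l < length ?bs \<and> v \<in> ?bs ! i \<and> v \<in> ?bs ! l"
    then have "(v = i \<or> v = Suc i) \<and> v < n" "v = l \<or> v = Suc l" "j < n"
      using nth by auto
    then show "v \<in> ?bs ! j"
      using h nth by auto
  qed
qed

lemma delete_vertices_path:
  assumes "n \<le> m"
  shows "path_V m - {n..<m} = path_V n" "delete_vertices (path_E m) {n..<m} = path_E n"
  using assms by (auto simp: path_V_def path_E_def delete_vertices_def)

lemma num_mpds_path_recurrence:
  assumes "3 \<le> n"
  shows "num_mpds (path_V (n + 2)) (path_E (n + 2)) + num_mpds (path_V n) (path_E n)
    \<le> num_mpds (path_V (n + 3)) (path_E (n + 3))"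
proof -
  interpret long_pendant_path "path_V (n + 3)" "path_E (n + 3)" "n + 2" "n + 1" n "n - 1" "n - 2" "n - 3"
    by unfold_locales (use assms in \<open>auto simp: simple_graph_path pendant_def adj_path_E\<close>)
  have "{n + 2} = {n + 2..<n + 3}" "{n + 2, n + 1, n} = {n..<n + 3}"
    by auto
  then show ?thesis
    using num_mpds_lower delete_vertices_path[of "n + 2" "n + 3"] delete_vertices_path[of n "n + 3"]
    by simp
qed

lemma one_minimal_pds_short_paths:
  "one_minimal_pds (path_V 3) (path_E 3) {1}"
  "one_minimal_pds (path_V 4) (path_E 4) {0, 3}"
  "one_minimal_pds (path_V 5) (path_E 5) {0, 3}"
proof -
  have V: "path_V 3 = {0, 1, 2}" "path_V 4 = {0, 1, 2, 3}" "path_V 5 = {0, 1, 2, 3, 4}"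
    by (auto simp: path_V_def)
  show "one_minimal_pds (path_V 3) (path_E 3) {1}"
  proof (rule one_minimal_pdsI[OF simple_graph_path])
    fix v assume "v \<in> path_V 3"
    then consider "v = 0" | "v = 1" | "v = 2"
      unfolding V by blast
    then show "mpds_at (path_E 3) {1} v"
      using mpds_at_dominatedI[of "0 :: nat" "{1}" 1 "path_E 3"] mpds_at_dominatedI[of "2 :: nat" "{1}" 1 "path_E 3"]
        mpds_at_outside_nbrI[of "1 :: nat" "{1}" "path_E 3" 0]
      by cases (simp_all add: adj_path_E)
  qed (simp add: V)
  show "one_minimal_pds (path_V 4) (path_E 4) {0, 3}"
  proof (rule one_minimal_pdsI[OF simple_graph_path])
    fix v assume "v \<in> path_V 4"
    then consider "v = 0" | "v = 1" | "v = 2" | "v = 3"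
      unfolding V by blast
    then show "mpds_at (path_E 4) {0, 3} v"
      using mpds_at_dominatedI[of "1 :: nat" "{0, 3}" 0 "path_E 4"] mpds_at_dominatedI[of "2 :: nat" "{0, 3}" 3 "path_E 4"]
        mpds_at_outside_nbrI[of "0 :: nat" "{0, 3}" "path_E 4" 1] mpds_at_outside_nbrI[of "3 :: nat" "{0, 3}" "path_E 4" 2]
      by cases (simp_all add: adj_path_E)
  qed (simp add: V)
  show "one_minimal_pds (path_V 5) (path_E 5) {0, 3}"
  proof (rule one_minimal_pdsI[OF simple_graph_path])
    fix v assume "v \<in> path_V 5"
    then consider "v = 0" | "v = 1" | "v = 2" | "v = 3" | "v = 4"
      unfolding V by blast
    then show "mpds_at (path_E 5) {0, 3} v"
      using mpds_at_dominatedI[of "1 :: nat" "{0, 3}" 0 "path_E 5"] mpds_at_dominatedI[of "2 :: nat" "{0, 3}" 3 "path_E 5"]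
        mpds_at_dominatedI[of "4 :: nat" "{0, 3}" 3 "path_E 5"]
        mpds_at_outside_nbrI[of "0 :: nat" "{0, 3}" "path_E 5" 1] mpds_at_outside_nbrI[of "3 :: nat" "{0, 3}" "path_E 5" 2]
      by cases (simp_all add: adj_path_E)
  qed (simp add: V)
qed

lemma one_le_num_mpds_path:
  assumes "3 \<le> n" "n \<le> 5"
  shows "1 \<le> num_mpds (path_V n) (path_E n)"
proof -
  have "n = 3 \<or> n = 4 \<or> n = 5"
    using assms by auto
  then obtain D where "one_minimal_pds (path_V n) (path_E n) D"
    using one_minimal_pds_short_paths by blast
  moreover have "finite {D. one_minimal_pds (path_V n) (path_E n) D}"
    by (simp add: finite_one_minimal_pds path_V_def)
  ultimately show ?thesis
    by (metis (mono_tags) One_nat_def Suc_leI card_gt_0_iff empty_iff mem_Collect_eq)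
qed

lemma num_mpds_path_lower:
  fixes \<alpha> :: real
  assumes \<alpha>: "\<alpha> ^ 3 - \<alpha> ^ 2 - 1 = 0" "1 < \<alpha>"
  shows "3 \<le> n \<Longrightarrow> \<alpha> ^ n / \<alpha> ^ 5 \<le> num_mpds (path_V n) (path_E n)"
proof (induction n rule: less_induct)
  case (less n)
  show ?case
  proof (cases "n \<le> 5")
    case True
    have "\<alpha> ^ n \<le> \<alpha> ^ 5"
      using True \<alpha>(2) by (intro power_increasing) auto
    then have "\<alpha> ^ n / \<alpha> ^ 5 \<le> 1"
      using \<alpha>(2) by simp
    then show ?thesis
      using one_le_num_mpds_path[OF less.prems True] by linarith
  next
    case False
    define m where "m = n - 3"
    have m: "n = m + 3" "3 \<le> m"
      using False unfolding m_def by simp_all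
    have "\<alpha> ^ n / \<alpha> ^ 5 = \<alpha> ^ (m + 2) / \<alpha> ^ 5 + \<alpha> ^ m / \<alpha> ^ 5"
      using alpha_power_recurrence[OF \<alpha>(1), of m] m(1) by (simp add: add_divide_distrib)
    also have "\<dots> \<le> real (num_mpds (path_V (m + 2)) (path_E (m + 2))) + real (num_mpds (path_V m) (path_E m))"
      using less.IH[of "m + 2"] less.IH[of m] m by (intro add_mono) simp_all
    also have "\<dots> \<le> num_mpds (path_V n) (path_E n)"
      using num_mpds_path_recurrence[OF m(2)] m(1) by (simp flip: of_nat_add)
    finally show ?thesis .
  qed
qed

lemma num_mpds_path_bigtheta:
  fixes \<alpha> :: real
  assumes \<alpha>: "\<alpha> ^ 3 - \<alpha> ^ 2 - 1 = 0" "1 < \<alpha>"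
  shows "(\<lambda>n. real (num_mpds (path_V n) (path_E n))) \<in> \<Theta>(\<lambda>n. \<alpha> ^ n)"
proof (rule bigthetaI'[of "1 / \<alpha> ^ 5" 1])
  show "0 < 1 / \<alpha> ^ 5" "(0 :: real) < 1"
    using \<alpha>(2) by simp_all
  have upper: "real (num_mpds (path_V n) (path_E n)) \<le> \<alpha> ^ n" for n
    using card_one_minimal_pds_pathwidth1_le[OF \<alpha> simple_graph_path pathwidth_path]
    by (simp add: path_V_def)
  show "\<forall>\<^sub>F n in sequentially. 1 / \<alpha> ^ 5 * norm (\<alpha> ^ n) \<le> norm (real (num_mpds (path_V n) (path_E n)))
      \<and> norm (real (num_mpds (path_V n) (path_E n))) \<le> 1 * norm (\<alpha> ^ n)"
    using num_mpds_path_lower[OF \<alpha>] upper \<alpha>(2)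
    by (intro eventually_sequentiallyI[of 3]) simp
qed

theorem mainTheorem8:
  fixes \<alpha> :: real
  assumes "\<alpha> ^ 3 - \<alpha> ^ 2 - 1 = 0" and "1 < \<alpha>" and "\<alpha> < 2"
  shows "(\<forall>(V :: 'a set) E. simple_graph V E \<and> pathwidth_at_most V E 1 \<longrightarrow>
            real (card {D. one_minimal_pds V E D}) \<le> \<alpha> ^ card V)
       \<and> (\<lambda>n. real (card {D. one_minimal_pds (path_V n) (path_E n) D})) \<in> \<Theta>(\<lambda>n. \<alpha> ^ n)"
  using card_one_minimal_pds_pathwidth1_le[OF assms(1,2)] num_mpds_path_bigtheta[OF assms(1,2)] by blast

end
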